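(* Let $\alpha\in\mathbb R$ be badly approximable, $k\in\mathbb Z\setminus\{0\}$ and $l\in\mathbb N$. Then for any $\epsilon>0$ there exists a constant $C>0$ depending only on $\alpha$ and $\epsilon$ such that for all integers $0\le M<N$, $$\left|\sum_{n=M+1}^N e^{2\pi i k\alpha n^2/l}\right|\le C(N-M)^{1/2+\epsilon}|k|^{1/2+\epsilon}l^{1/2}.$$
   Context: A real number $\alpha$ is badly approximable if the partial quotients in its continued fraction expansion are bounded. *)

theory Defs
  imports Complex_Main
begin

text \<open>Complete quotients of the (regular) continued fraction expansion:
  alpha_0 = alpha, alpha_(n+1) = 1 / frac(alpha_n).  For irrational alpha
  frac(alpha_n) is never 0, so this is the usual expansion.\<close>
fun cf_rem :: "real \<Rightarrow> nat \<Rightarrow> real" where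
  "cf_rem x 0 = x"
| "cf_rem x (Suc n) = 1 / frac (cf_rem x n)"

definition cf_quot :: "real \<Rightarrow> nat \<Rightarrow> int" where
  "cf_quot x n = \<lfloor>cf_rem x n\<rfloor>"

definition badly_approximable :: "real \<Rightarrow> bool" where
  "badly_approximable x \<longleftrightarrow> x \<notin> \<rat> \<and> (\<exists>B. \<forall>n. \<bar>cf_quot x n\<bar> \<le> B)"

end

theory Submission
  imports Defs "HOL-Analysis.Harmonic_Numbers"
begin

text \<open>
  Write \<open>\<parallel>x\<parallel>\<close> for the distance from \<open>x\<close> to the nearest integer. If the partial quotients of
  \<open>\<alpha>\<close> are bounded, the orbit of \<open>frac \<alpha>\<close> under the Gauss map \<open>x \<mapsto> frac (1/x)\<close> stays in a
  compact subinterval of \<open>(0,1)\<close>, and an induction on the denominator along this orbit gives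
  \<open>|q| \<parallel>q\<alpha>\<parallel> \<ge> c > 0\<close> for all \<open>q \<noteq> 0\<close>.

  For a sum \<open>S\<close> of \<open>L = N - M\<close> terms \<open>e(k\<alpha>n\<^sup>2/l)\<close>, Weyl differencing and the geometric series give
  \<open>|S|\<^sup>2 \<le> L + 4 \<Sum>\<^sub>h 1 / \<parallel>2hk\<alpha>/l\<parallel>\<close>, summed over \<open>0 < h < L\<close>. By the Diophantine
  bound the points \<open>2hk\<alpha>/l\<close> are \<open>\<delta>\<close>-separated modulo 1 and \<open>\<delta>\<close>-far from the integers, with \<open>\<delta> = c / (2L|k|l)\<close>, so at most two
  of them have \<open>\<parallel>\<cdot>\<parallel>\<close> in each interval \<open>[j\<delta>, (j+1)\<delta>)\<close> and the sum is \<open>O(\<delta>\<^sup>-\<^sup>1 log \<delta>\<^sup>-\<^sup>1)\<close>.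
  For \<open>l \<le> L\<close> the logarithm is absorbed into \<open>(L|k|)\<^sup>2\<^sup>\<epsilon>\<close>; for \<open>l > L\<close> the trivial bound
  \<open>|S| \<le> L\<close> suffices.
\<close>

section \<open>Badly approximable numbers\<close>

definition dist_nearest_int :: "real \<Rightarrow> real" where
  "dist_nearest_int x = \<bar>x - of_int (round x)\<bar>"

lemma dist_nearest_int_le: "dist_nearest_int x \<le> \<bar>x - of_int m\<bar>"
  unfolding dist_nearest_int_def by (rule round_diff_minimal)

lemma dist_nearest_int_nonneg [simp]: "0 \<le> dist_nearest_int x"
  unfolding dist_nearest_int_def by simp

lemma dist_nearest_int_le_half: "dist_nearest_int x \<le> 1 / 2"
  unfolding dist_nearest_int_def using of_int_round_ge[of x] of_int_round_le[of x] by linarith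

lemma dist_nearest_int_of_nat_mult_le:
  "dist_nearest_int (real l * x) \<le> real l * dist_nearest_int x"
proof -
  have "dist_nearest_int (real l * x) \<le> \<bar>real l * x - of_int (int l * round x)\<bar>"
    by (rule dist_nearest_int_le)
  also have "\<dots> = \<bar>real l * (x - of_int (round x))\<bar>" by (simp add: algebra_simps)
  also have "\<dots> = real l * dist_nearest_int x"
    unfolding dist_nearest_int_def by (simp add: abs_mult)
  finally show ?thesis .
qed

lemma dist_nearest_int_minus [simp]: "dist_nearest_int (- x) = dist_nearest_int x"
proof -
  have "dist_nearest_int (- y) \<le> dist_nearest_int y" for y
    using dist_nearest_int_le[of "- y" "- round y"] unfolding dist_nearest_int_def by simp
  from this[of x] this[of "- x"] show ?thesis by simp
qed

lemma cf_rem_not_Rats: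
  assumes "x \<notin> \<rat>"
  shows "cf_rem x n \<notin> \<rat>"
proof (induction n)
  case 0
  then show ?case using assms by simp
next
  case (Suc n)
  show ?case
  proof
    assume "cf_rem x (Suc n) \<in> \<rat>"
    then have "frac (cf_rem x n) \<in> \<rat>"
      by (metis Rats_inverse cf_rem.simps(2) inverse_eq_divide inverse_inverse_eq)
    then have "frac (cf_rem x n) + of_int \<lfloor>cf_rem x n\<rfloor> \<in> \<rat>" by simp
    then show False using Suc by (simp add: frac_def)
  qed
qed

lemma badly_approximable_frac_cf_rem_bounds:
  assumes "badly_approximable x"
  obtains m where "m > 0" "\<And>n. m \<le> frac (cf_rem x n)" "\<And>n. m \<le> 1 - frac (cf_rem x n)"
proof -
  obtain B where irr: "x \<notin> \<rat>" and B: "\<And>n. \<bar>cf_quot x n\<bar> \<le> B"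
    using assms unfolding badly_approximable_def by blast
  define y where "y n = frac (cf_rem x n)" for n
  define B' where "B' = max (real_of_int B) 1"
  have B'_ge: "1 \<le> B'" unfolding B'_def by simp
  have y_pos: "0 < y n" for n
    using cf_rem_not_Rats[OF irr, of n] frac_ge_0[of "cf_rem x n"] Ints_subset_Rats
    unfolding y_def by (metis frac_eq_0_iff less_eq_real_def subsetD)
  have y_less_1: "y n < 1" for n
    unfolding y_def by (rule frac_lt_1)
  have gauss: "1 / y n = of_int (cf_quot x (Suc n)) + y (Suc n)" for n
    unfolding y_def cf_quot_def by (simp add: frac_def)
  have quot_pos: "1 \<le> cf_quot x (Suc n)" for n
  proof -
    have "1 < 1 / y n" using y_pos[of n] y_less_1[of n] by (simp add: field_simps)
    then show ?thesis using gauss[of n] y_less_1[of "Suc n"] by linarith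
  qed
  have y_lower: "1 / (B' + 1) \<le> y n" for n
  proof -
    have "1 / y n \<le> B' + 1"
      using gauss[of n] B[of "Suc n"] y_less_1[of "Suc n"] unfolding B'_def by linarith
    then show ?thesis using y_pos[of n] B'_ge by (simp add: field_simps)
  qed
  have y_upper: "1 / (B' + 2) \<le> 1 - y n" for n
  proof -
    have "1 + 1 / (B' + 1) \<le> 1 / y n"
      using gauss[of n] quot_pos[of n] y_lower[of "Suc n"] by linarith
    then have "y n * (B' + 2) \<le> B' + 1"
      using y_pos[of n] unfolding B'_def by (simp add: field_simps)
    then show ?thesis unfolding B'_def by (simp add: field_simps)
  qed
  have "1 / (B' + 2) \<le> 1 / (B' + 1)" using B'_ge by (simp add: frac_le)
  show ?thesis
  proof (rule that[of "1 / (B' + 2)"])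
    show "0 < 1 / (B' + 2)" using B'_ge by simp
    show "1 / (B' + 2) \<le> frac (cf_rem x n)" for n
      using y_lower[of n] \<open>1 / (B' + 2) \<le> 1 / (B' + 1)\<close> unfolding y_def by linarith
    show "1 / (B' + 2) \<le> 1 - frac (cf_rem x n)" for n
      using y_upper[of n] unfolding y_def .
  qed
qed

text \<open>If \<open>q x\<^sub>n\<close> is within \<open>1/(2q)\<close> of an integer \<open>p\<close> with \<open>0 < p < q\<close>, then
  \<open>p x\<^sub>n\<^sub>+\<^sub>1\<close> is within \<open>|q x\<^sub>n - p| / x\<^sub>n\<close> of the integer \<open>q - a\<^sub>n p\<close>: the Gauss map trades
  the denominator \<open>q\<close> for the smaller \<open>p\<close>, which drives the induction below.\<close>

lemma gauss_step_diophantine: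
  fixes x x' A P Q c :: real
  assumes x: "0 < x" and gauss: "1 / x = A + x'"
    and P: "1 \<le> P" and PQ: "P + 1 \<le> Q" and near: "\<bar>Q * x - P\<bar> \<le> 1 / (2 * Q)" and c: "0 \<le> c"
    and IH: "c * (1 + 1 / P) \<le> P * \<bar>P * x' - (Q - A * P)\<bar>"
  shows "c * (1 + 1 / Q) \<le> Q * \<bar>Q * x - P\<bar>"
proof -
  define \<eta> where "\<eta> = Q * x - P"
  define \<eta>' where "\<eta>' = P * x' - (Q - A * P)"
  have x': "x' = 1 / x - A" using gauss by simp
  have \<eta>_eq: "\<eta> = - x * \<eta>'" unfolding \<eta>_def \<eta>'_def x' using x by (simp add: field_simps)
  have "(1 - \<bar>\<eta>\<bar> / P) * (P * \<bar>\<eta>'\<bar>) = (P - \<bar>\<eta>\<bar>) * \<bar>\<eta>'\<bar>" using P by (simp add: field_simps)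
  also have "\<dots> \<le> (P + \<eta>) * \<bar>\<eta>'\<bar>" by (intro mult_right_mono) auto
  also have "\<dots> = Q * \<bar>\<eta>\<bar>" using \<eta>_eq x unfolding \<eta>_def by (simp add: abs_mult)
  finally have upper: "(1 - \<bar>\<eta>\<bar> / P) * (P * \<bar>\<eta>'\<bar>) \<le> Q * \<bar>\<eta>\<bar>" .
  have "(1 - 1 / (2 * Q * P)) * (c * (1 + 1 / P)) \<le> (1 - \<bar>\<eta>\<bar> / P) * (P * \<bar>\<eta>'\<bar>)"
  proof (rule mult_mono)
    show "1 - 1 / (2 * Q * P) \<le> 1 - \<bar>\<eta>\<bar> / P" using near P PQ unfolding \<eta>_def by (simp add: field_simps)
    have "1 / (2 * Q) \<le> 1 / 2" using P PQ by (simp add: field_simps)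
    then show "0 \<le> 1 - \<bar>\<eta>\<bar> / P" using near P unfolding \<eta>_def by (simp add: field_simps)
    show "c * (1 + 1 / P) \<le> P * \<bar>\<eta>'\<bar>" using IH unfolding \<eta>'_def .
  qed (use c P in simp)
  moreover have "c * (1 + 1 / Q) \<le> (1 - 1 / (2 * Q * P)) * (c * (1 + 1 / P))"
  proof -
    have "P * 1 \<le> P * (Q - P)" using P PQ by (intro mult_left_mono) auto
    then have "0 \<le> 2 * (P * (Q - P)) - P - 1" using P by linarith
    then have "0 \<le> (2 * (P * (Q - P)) - P - 1) / (2 * Q * P * P)"
      by (rule divide_nonneg_pos) (use P PQ in auto)
    also have "\<dots> = (1 - 1 / (2 * Q * P)) * (1 + 1 / P) - (1 + 1 / Q)"
      using P PQ by (simp add: field_simps)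
    finally have "1 + 1 / Q \<le> (1 - 1 / (2 * Q * P)) * (1 + 1 / P)" by simp
    from mult_left_mono[OF this c] show ?thesis by (simp add: mult.left_commute)
  qed
  ultimately show ?thesis using upper unfolding \<eta>_def by linarith
qed

lemma gauss_orbit_diophantine:
  fixes x :: "nat \<Rightarrow> real" and a :: "nat \<Rightarrow> int"
  assumes c: "c > 0"
    and x_lower: "\<And>n. 2 * c \<le> x n" and x_upper: "\<And>n. 2 * c \<le> 1 - x n"
    and gauss: "\<And>n. 1 / x n = of_int (a n) + x (Suc n)"
    and q: "q \<ge> 1"
  shows "c * (1 + 1 / real q) \<le> real q * \<bar>real q * x n - of_int p\<bar>"
  using q
proof (induction q arbitrary: n p rule: less_induct)
  case (less q)
  define \<eta> where "\<eta> = real q * x n - of_int p"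
  have q1: "real q \<ge> 1" using less.prems by simp
  have x_pos: "0 < x n" using c x_lower[of n] by linarith
  have goal_le: "c * (1 + 1 / real q) \<le> 2 * c" using c q1 by (simp add: field_simps)
  have scale: "\<bar>\<eta>\<bar> \<le> real q * \<bar>\<eta>\<bar>" using q1 mult_right_mono[of 1 "real q" "\<bar>\<eta>\<bar>"] by simp
  consider (far) "1 / (2 * real q) < \<bar>\<eta>\<bar>" | (p_low) "p \<le> 0" | (p_high) "int q \<le> p"
    | (near) "\<bar>\<eta>\<bar> \<le> 1 / (2 * real q)" "1 \<le> p" "p < int q" by linarith
  then show ?case
  proof cases
    case far
    then have "1 / 2 < real q * \<bar>\<eta>\<bar>" using q1 by (simp add: field_simps)
    then show ?thesis using goal_le x_lower[of n] x_upper[of n] unfolding \<eta>_def by linarith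
  next
    case p_low
    have "x n \<le> real q * x n" using q1 x_pos mult_right_mono[of 1 "real q" "x n"] by simp
    then have "x n \<le> \<bar>\<eta>\<bar>" using p_low unfolding \<eta>_def by linarith
    then show ?thesis using scale goal_le x_lower[of n] unfolding \<eta>_def by linarith
  next
    case p_high
    then have "real q * (1 - x n) \<le> \<bar>\<eta>\<bar>" unfolding \<eta>_def by (simp add: algebra_simps)
    moreover have "1 - x n \<le> real q * (1 - x n)"
      using q1 x_upper[of n] c mult_right_mono[of 1 "real q" "1 - x n"] by simp
    ultimately show ?thesis using scale goal_le x_upper[of n] unfolding \<eta>_def by linarith
  next
    case near
    have "c * (1 + 1 / real (nat p)) \<le> real (nat p) * \<bar>real (nat p) * x (Suc n) - of_int (int q - a n * p)\<bar>"
      using less.IH[of "nat p" "Suc n" "int q - a n * p"] near by simp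
    then have "c * (1 + 1 / of_int p) \<le> of_int p * \<bar>of_int p * x (Suc n) - (real q - of_int (a n) * of_int p)\<bar>"
      using near by simp
    with gauss_step_diophantine[OF x_pos gauss[of n]] near c show ?thesis
      unfolding \<eta>_def by simp
  qed
qed

lemma badly_approximable_diophantine:
  assumes "badly_approximable \<alpha>"
  obtains c where "c > 0" "\<And>q. q \<noteq> 0 \<Longrightarrow> c \<le> \<bar>real_of_int q\<bar> * dist_nearest_int (of_int q * \<alpha>)"
proof -
  obtain m where m: "m > 0" "\<And>n. m \<le> frac (cf_rem \<alpha> n)" "\<And>n. m \<le> 1 - frac (cf_rem \<alpha> n)"
    using badly_approximable_frac_cf_rem_bounds[OF assms] by blast
  define x where "x n = frac (cf_rem \<alpha> n)" for n
  have orbit_bound: "m / 2 \<le> real q * \<bar>real q * x 0 - of_int p\<bar>" if "q \<ge> 1" for q p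
  proof -
    have "m / 2 * (1 + 1 / real q) \<le> real q * \<bar>real q * x 0 - of_int p\<bar>"
    proof (rule gauss_orbit_diophantine[OF _ _ _ _ that])
      show "1 / x n = of_int (cf_quot \<alpha> (Suc n)) + x (Suc n)" for n
        unfolding x_def cf_quot_def by (simp add: frac_def)
    qed (use m in \<open>auto simp: x_def\<close>)
    moreover have "m / 2 \<le> m / 2 * (1 + 1 / real q)" using m by simp
    ultimately show ?thesis by linarith
  qed
  have positive_q: "m / 2 \<le> real_of_int q * dist_nearest_int (of_int q * \<alpha>)" if "q > 0" for q
  proof -
    define r where "r = round (of_int q * \<alpha>)"
    have "m / 2 \<le> real (nat q) * \<bar>real (nat q) * x 0 - of_int (r - q * \<lfloor>\<alpha>\<rfloor>)\<bar>"
      using orbit_bound[of "nat q" "r - q * \<lfloor>\<alpha>\<rfloor>"] that by simp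
    also have "\<dots> = real_of_int q * \<bar>of_int q * \<alpha> - of_int r\<bar>"
      using that by (simp add: x_def frac_def algebra_simps)
    finally show ?thesis unfolding dist_nearest_int_def r_def .
  qed
  have "m / 2 \<le> \<bar>real_of_int q\<bar> * dist_nearest_int (of_int q * \<alpha>)" if "q \<noteq> 0" for q
  proof (cases "q > 0")
    case True
    then show ?thesis using positive_q by simp
  next
    case False
    then show ?thesis using positive_q[of "- q"] that by simp
  qed
  then show ?thesis using that[of "m / 2"] m by simp
qed

section \<open>Weyl differencing\<close>

definition e2pi :: "real \<Rightarrow> complex" where
  "e2pi t = cis (2 * pi * t)"

lemma exp_eq_e2pi: "exp (2 * pi * \<i> * of_real t) = e2pi t"
  unfolding e2pi_def cis_conv_exp by (simp add: mult_ac)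

lemma e2pi_add: "e2pi (s + t) = e2pi s * e2pi t"
  unfolding e2pi_def by (simp add: cis_mult distrib_left)

lemma norm_e2pi [simp]: "norm (e2pi t) = 1"
  unfolding e2pi_def by simp

lemma cnj_e2pi: "cnj (e2pi t) = e2pi (- t)"
  unfolding e2pi_def by (simp add: cis_cnj)

lemma e2pi_mult_cnj [simp]: "e2pi t * cnj (e2pi t) = 1"
  by (simp add: cnj_e2pi flip: e2pi_add) (simp add: e2pi_def)

lemma e2pi_of_int [simp]: "e2pi (of_int m) = 1"
  unfolding e2pi_def by (simp add: Ints_of_int)

lemma e2pi_power: "e2pi t ^ j = e2pi (real j * t)"
  unfolding e2pi_def Complex.DeMoivre by (simp add: mult_ac)

lemma sin_ge_third:
  fixes t :: real
  assumes "0 \<le> t" "t \<le> 2"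
  shows "t / 3 \<le> sin t"
proof -
  have "\<bar>sin t - t\<bar> \<le> t ^ 3 / 6"
    using Maclaurin_sin_bound[of t 3] assms by (simp add: sin_coeff_def eval_nat_numeral fact_numeral)
  moreover have "t ^ 3 \<le> 4 * t"
    using assms mult_left_mono[of "t\<^sup>2" 4 t] power_mono[of t 2 2]
    by (simp add: power3_eq_cube power2_eq_square)
  ultimately show ?thesis by linarith
qed

lemma norm_one_minus_cis: "norm (1 - cis \<phi>) = 2 * \<bar>sin (\<phi> / 2)\<bar>"
proof -
  have "norm (1 - cis \<phi>) ^ 2 = (1 - cos \<phi>)\<^sup>2 + (sin \<phi>)\<^sup>2" by (simp add: cmod_power2)
  also have "\<dots> = 2 - 2 * cos \<phi>"
    using sin_cos_squared_add[of \<phi>] by (simp add: power2_eq_square algebra_simps)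
  also have "\<dots> = (2 * \<bar>sin (\<phi> / 2)\<bar>)\<^sup>2"
    using cos_double_sin[of "\<phi> / 2"] by (simp add: power2_eq_square)
  finally show ?thesis by (rule power2_eq_imp_eq) auto
qed

lemma abs_le_norm_one_minus_e2pi:
  assumes "\<bar>d\<bar> \<le> 1 / 2"
  shows "\<bar>d\<bar> \<le> norm (1 - e2pi d)"
proof -
  have "pi * \<bar>d\<bar> \<le> pi * (1 / 2)" using assms by (intro mult_left_mono) auto
  then have "pi * \<bar>d\<bar> \<le> 2" using pi_less_4 by linarith
  then have "pi * \<bar>d\<bar> / 3 \<le> sin (pi * \<bar>d\<bar>)" by (intro sin_ge_third) auto
  moreover have "2 * \<bar>d\<bar> \<le> pi * \<bar>d\<bar>" using pi_ge_two by (intro mult_right_mono) auto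
  moreover have "\<bar>sin (pi * d)\<bar> = \<bar>sin (pi * \<bar>d\<bar>)\<bar>" by (cases "d \<ge> 0") auto
  ultimately have "\<bar>d\<bar> / 2 \<le> \<bar>sin (pi * d)\<bar>" by linarith
  then show ?thesis unfolding e2pi_def norm_one_minus_cis by simp
qed

lemma dist_nearest_int_mult_norm_geometric_sum_le:
  "dist_nearest_int \<beta> * norm (\<Sum>j<n. e2pi (\<beta> * real j)) \<le> 2"
proof -
  define d where "d = \<beta> - of_int (round \<beta>)"
  have dist_eq: "dist_nearest_int \<beta> = \<bar>d\<bar>" unfolding d_def dist_nearest_int_def ..
  show ?thesis
  proof (cases "d = 0")
    case True
    then show ?thesis using dist_eq by simp
  next
    case False
    have norm_ge: "\<bar>d\<bar> \<le> norm (1 - e2pi d)"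
      using dist_nearest_int_le_half[of \<beta>] dist_eq by (intro abs_le_norm_one_minus_e2pi) simp
    then have "e2pi d \<noteq> 1" using False by auto
    have "e2pi (\<beta> * real j) = e2pi d ^ j" for j
    proof -
      have "e2pi (\<beta> * real j) = e2pi (real j * d + of_int (int j * round \<beta>))"
        by (rule arg_cong[where f = e2pi]) (simp add: d_def algebra_simps)
      also have "\<dots> = e2pi d ^ j" by (simp only: e2pi_add e2pi_of_int e2pi_power mult_1_right)
      finally show ?thesis .
    qed
    then have "(\<Sum>j<n. e2pi (\<beta> * real j)) = (1 - e2pi d ^ n) / (1 - e2pi d)"
      using \<open>e2pi d \<noteq> 1\<close> by (simp add: sum_gp_strict)
    moreover have "norm (1 - e2pi d ^ n) \<le> 2"
      using norm_triangle_ineq4[of 1 "e2pi d ^ n"] by (simp add: norm_power)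
    ultimately have "norm (\<Sum>j<n. e2pi (\<beta> * real j)) \<le> 2 / norm (1 - e2pi d)"
      by (simp add: norm_divide divide_right_mono)
    also have "\<dots> \<le> 2 / \<bar>d\<bar>"
      using norm_ge False by (intro divide_left_mono mult_pos_pos) auto
    finally show ?thesis using dist_eq False by (simp add: field_simps)
  qed
qed

definition weyl_diff_sum :: "(nat \<Rightarrow> complex) \<Rightarrow> nat \<Rightarrow> complex" where
  "weyl_diff_sum F L = (\<Sum>h\<in>{1..<L}. \<Sum>j<L - h. F (j + h) * cnj (F j))"

lemma weyl_diff_sum_Suc:
  "weyl_diff_sum F (Suc L) = weyl_diff_sum F L + F L * cnj (\<Sum>i<L. F i)"
proof -
  have "weyl_diff_sum F (Suc L)
      = (\<Sum>h\<in>{1..L}. (\<Sum>j<L - h. F (j + h) * cnj (F j)) + F L * cnj (F (L - h)))"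
    unfolding weyl_diff_sum_def
  proof (rule sum.cong)
    fix h assume "h \<in> {1..L}"
    then have "Suc L - h = Suc (L - h)" by auto
    then show "(\<Sum>j<Suc L - h. F (j + h) * cnj (F j))
        = (\<Sum>j<L - h. F (j + h) * cnj (F j)) + F L * cnj (F (L - h))"
      using \<open>h \<in> {1..L}\<close> by simp
  qed auto
  also have "\<dots> = (\<Sum>h\<in>{1..L}. \<Sum>j<L - h. F (j + h) * cnj (F j)) + F L * (\<Sum>h\<in>{1..L}. cnj (F (L - h)))"
    by (simp add: sum.distrib sum_distrib_left)
  also have "(\<Sum>h\<in>{1..L}. \<Sum>j<L - h. F (j + h) * cnj (F j)) = weyl_diff_sum F L"
    unfolding weyl_diff_sum_def by (rule sum.mono_neutral_right) auto
  also have "(\<Sum>h\<in>{1..L}. cnj (F (L - h))) = (\<Sum>i<L. cnj (F i))"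
    by (rule sum.reindex_bij_witness[of _ "\<lambda>i. L - i" "\<lambda>h. L - h"]) auto
  finally show ?thesis by simp
qed

lemma sum_mult_cnj_eq_weyl_diff_sum:
  assumes unimodular: "\<And>i. F i * cnj (F i) = 1"
  shows "(\<Sum>i<L. F i) * cnj (\<Sum>i<L. F i) = of_nat L + weyl_diff_sum F L + cnj (weyl_diff_sum F L)"
proof (induction L)
  case 0
  then show ?case by (simp add: weyl_diff_sum_def)
next
  case (Suc L)
  let ?S = "\<Sum>i<L. F i"
  have "(\<Sum>i<Suc L. F i) * cnj (\<Sum>i<Suc L. F i) = (?S + F L) * (cnj ?S + cnj (F L))"
    by simp
  also have "\<dots> = ?S * cnj ?S + F L * cnj (F L) + F L * cnj ?S + cnj (F L * cnj ?S)"
    by (simp add: algebra_simps)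
  also have "\<dots> = of_nat (Suc L) + weyl_diff_sum F (Suc L) + cnj (weyl_diff_sum F (Suc L))"
    using Suc unimodular[of L] by (simp add: weyl_diff_sum_Suc)
  finally show ?case .
qed

lemma weyl_differencing:
  assumes "\<And>i. F i * cnj (F i) = 1"
  shows "norm (\<Sum>i<L. F i) ^ 2 \<le> real L + 2 * (\<Sum>h\<in>{1..<L}. norm (\<Sum>j<L - h. F (j + h) * cnj (F j)))"
proof -
  have "norm (\<Sum>i<L. F i) ^ 2 = Re (of_nat L + weyl_diff_sum F L + cnj (weyl_diff_sum F L))"
    by (simp only: sum_mult_cnj_eq_weyl_diff_sum[OF assms, symmetric] complex_norm_square[symmetric]
        Re_complex_of_real)
  also have "\<dots> = real L + 2 * Re (weyl_diff_sum F L)" by simp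
  also have "\<dots> \<le> real L + 2 * norm (weyl_diff_sum F L)" using complex_Re_le_cmod by simp
  also have "norm (weyl_diff_sum F L) \<le> (\<Sum>h\<in>{1..<L}. norm (\<Sum>j<L - h. F (j + h) * cnj (F j)))"
    unfolding weyl_diff_sum_def by (rule norm_sum)
  finally show ?thesis by simp
qed

lemma norm_quadratic_weyl_sum_sq_le:
  fixes \<theta> a :: real
  assumes "\<And>h. h \<in> {1..<L} \<Longrightarrow> 0 < dist_nearest_int (real h * (2 * \<theta>))"
  shows "norm (\<Sum>i<L. e2pi (\<theta> * (a + real i)\<^sup>2)) ^ 2
    \<le> real L + 4 * (\<Sum>h\<in>{1..<L}. 1 / dist_nearest_int (real h * (2 * \<theta>)))"
proof -
  define F where "F i = e2pi (\<theta> * (a + real i)\<^sup>2)" for i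
  have inner: "norm (\<Sum>j<L - h. F (j + h) * cnj (F j)) \<le> 2 * (1 / dist_nearest_int (real h * (2 * \<theta>)))"
    if h: "h \<in> {1..<L}" for h
  proof -
    define \<beta> where "\<beta> = real h * (2 * \<theta>)"
    have "F (j + h) * cnj (F j) = e2pi (\<theta> * ((real h)\<^sup>2 + 2 * a * real h)) * e2pi (\<beta> * real j)" for j
    proof -
      have "\<theta> * (a + real (j + h))\<^sup>2 + - (\<theta> * (a + real j)\<^sup>2) = \<theta> * ((real h)\<^sup>2 + 2 * a * real h) + \<beta> * real j"
        unfolding \<beta>_def by (simp add: power2_eq_square algebra_simps)
      then show ?thesis unfolding F_def cnj_e2pi by (simp only: e2pi_add[symmetric])
    qed
    then have "norm (\<Sum>j<L - h. F (j + h) * cnj (F j)) = norm (\<Sum>j<L - h. e2pi (\<beta> * real j))"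
      by (simp add: sum_distrib_left[symmetric] norm_mult)
    moreover have "dist_nearest_int \<beta> * norm (\<Sum>j<L - h. e2pi (\<beta> * real j)) \<le> 2"
      by (rule dist_nearest_int_mult_norm_geometric_sum_le)
    ultimately show ?thesis using assms[OF h] unfolding \<beta>_def by (simp add: field_simps)
  qed
  have "norm (\<Sum>i<L. F i) ^ 2 \<le> real L + 2 * (\<Sum>h\<in>{1..<L}. norm (\<Sum>j<L - h. F (j + h) * cnj (F j)))"
    by (rule weyl_differencing) (simp add: F_def)
  also have "\<dots> \<le> real L + 2 * (\<Sum>h\<in>{1..<L}. 2 * (1 / dist_nearest_int (real h * (2 * \<theta>))))"
    using inner by (intro add_left_mono mult_left_mono sum_mono) auto
  finally show ?thesis unfolding F_def by (simp add: sum_distrib_left)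
qed

section \<open>Sums over well-separated points\<close>

text \<open>Points \<open>y h\<close> with the same value of \<open>\<lfloor>|y h| / \<delta>\<rfloor>\<close> lie in two intervals of length \<open>\<delta>\<close>,
  one on each side of \<open>0\<close>, and a \<open>\<delta>\<close>-separated set meets each of them at most once.\<close>

lemma card_same_scale_le_two:
  fixes y :: "'a \<Rightarrow> real"
  assumes fin: "finite H" and \<delta>: "\<delta> > 0"
    and sep: "\<And>h h'. h \<in> H \<Longrightarrow> h' \<in> H \<Longrightarrow> h \<noteq> h' \<Longrightarrow> \<delta> \<le> \<bar>y h - y h'\<bar>"
  shows "card {h \<in> H. nat \<lfloor>\<bar>y h\<bar> / \<delta>\<rfloor> = j} \<le> 2"
proof -
  define A where "A = {h \<in> H. nat \<lfloor>\<bar>y h\<bar> / \<delta>\<rfloor> = j}"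
  have close: "\<bar>y h - y h'\<bar> < \<delta>" if "h \<in> A" "h' \<in> A" "(0 \<le> y h) = (0 \<le> y h')" for h h'
  proof -
    have "\<lfloor>\<bar>y h\<bar> / \<delta>\<rfloor> = \<lfloor>\<bar>y h'\<bar> / \<delta>\<rfloor>"
      using that(1,2) \<delta> eq_nat_nat_iff[of "\<lfloor>\<bar>y h\<bar> / \<delta>\<rfloor>" "\<lfloor>\<bar>y h'\<bar> / \<delta>\<rfloor>"]
      unfolding A_def by simp
    then have "\<bar>\<bar>y h\<bar> / \<delta> - \<bar>y h'\<bar> / \<delta>\<bar> < 1" by (rule floor_eq_imp_diff_1)
    then have "\<bar>\<bar>y h\<bar> - \<bar>y h'\<bar>\<bar> < \<delta>"
      using \<delta> by (simp add: diff_divide_distrib[symmetric] abs_divide)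
    then show ?thesis using that(3) by (cases "0 \<le> y h") auto
  qed
  have at_most_one: "card {h \<in> A. (0 \<le> y h) = b} \<le> 1" for b
  proof -
    have "h = h'" if "h \<in> {h \<in> A. (0 \<le> y h) = b}" "h' \<in> {h \<in> A. (0 \<le> y h) = b}" for h h'
    proof (rule ccontr)
      assume "h \<noteq> h'"
      have "h \<in> H" "h' \<in> H" using that unfolding A_def by auto
      then have "\<delta> \<le> \<bar>y h - y h'\<bar>" using \<open>h \<noteq> h'\<close> by (rule sep)
      moreover have "\<bar>y h - y h'\<bar> < \<delta>" using that by (intro close) auto
      ultimately show False by simp
    qed
    moreover have "finite {h \<in> A. (0 \<le> y h) = b}" using fin unfolding A_def by simp
    ultimately show ?thesis by (simp add: card_le_Suc0_iff_eq)
  qed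
  have "A = {h \<in> A. (0 \<le> y h) = True} \<union> {h \<in> A. (0 \<le> y h) = False}" by auto
  then have "card A \<le> card {h \<in> A. (0 \<le> y h) = True} + card {h \<in> A. (0 \<le> y h) = False}"
    by (metis card_Un_le)
  then show ?thesis using at_most_one[of True] at_most_one[of False] unfolding A_def by linarith
qed

lemma sum_inverse_separated_le_harm:
  fixes y :: "'a \<Rightarrow> real"
  assumes fin: "finite H" and \<delta>: "\<delta> > 0"
    and bounds: "\<And>h. h \<in> H \<Longrightarrow> \<delta> \<le> \<bar>y h\<bar> \<and> \<bar>y h\<bar> \<le> 1 / 2"
    and sep: "\<And>h h'. h \<in> H \<Longrightarrow> h' \<in> H \<Longrightarrow> h \<noteq> h' \<Longrightarrow> \<delta> \<le> \<bar>y h - y h'\<bar>"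
  shows "(\<Sum>h\<in>H. 1 / \<bar>y h\<bar>) \<le> 2 / \<delta> * harm (nat \<lfloor>1 / (2 * \<delta>)\<rfloor>)"
proof -
  define g where "g h = nat \<lfloor>\<bar>y h\<bar> / \<delta>\<rfloor>" for h
  define J where "J = nat \<lfloor>1 / (2 * \<delta>)\<rfloor>"
  have g_le: "\<delta> * real (g h) \<le> \<bar>y h\<bar>" for h
  proof -
    have "0 \<le> \<bar>y h\<bar> / \<delta>" using \<delta> by simp
    then have "real (g h) \<le> \<bar>y h\<bar> / \<delta>" unfolding g_def by linarith
    then show ?thesis using \<delta> by (simp add: field_simps)
  qed
  have g_range: "g h \<in> {1..J}" if "h \<in> H" for h
  proof -
    have "1 \<le> \<bar>y h\<bar> / \<delta>" "\<bar>y h\<bar> / \<delta> \<le> 1 / (2 * \<delta>)"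
      using bounds[OF that] \<delta> by (simp_all add: field_simps)
    then show ?thesis unfolding g_def J_def by (auto intro!: nat_mono floor_mono) linarith
  qed
  have "(\<Sum>h\<in>H. 1 / \<bar>y h\<bar>) \<le> (\<Sum>h\<in>H. 1 / (\<delta> * real (g h)))"
  proof (rule sum_mono)
    fix h assume "h \<in> H"
    then have "0 < \<delta> * real (g h)" using g_range[OF \<open>h \<in> H\<close>] \<delta> by simp
    then show "1 / \<bar>y h\<bar> \<le> 1 / (\<delta> * real (g h))" using g_le by (intro frac_le) auto
  qed
  also have "\<dots> = (\<Sum>j\<in>g ` H. real (card {h \<in> H. g h = j}) * (1 / (\<delta> * real j)))"
    by (simp add: sum.image_gen[OF fin, of "\<lambda>h. 1 / (\<delta> * real (g h))" g])
  also have "\<dots> \<le> (\<Sum>j\<in>g ` H. 2 * (1 / (\<delta> * real j)))"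
    using card_same_scale_le_two[OF fin \<delta> sep] \<delta>
    by (intro sum_mono mult_right_mono) (auto simp: g_def)
  also have "\<dots> \<le> (\<Sum>j\<in>{1..J}. 2 * (1 / (\<delta> * real j)))"
    using g_range \<delta> by (intro sum_mono2) auto
  also have "\<dots> = 2 / \<delta> * harm J"
    by (simp add: harm_def sum_distrib_left field_simps)
  finally show ?thesis unfolding J_def .
qed

lemma sum_inverse_dist_nearest_int_multiples_le:
  fixes \<beta> \<delta> :: real
  assumes \<delta>: "\<delta> > 0"
    and far: "\<And>m. m \<noteq> 0 \<Longrightarrow> \<bar>m\<bar> < int L \<Longrightarrow> \<delta> \<le> dist_nearest_int (of_int m * \<beta>)"
  shows "(\<Sum>h\<in>{1..<L}. 1 / dist_nearest_int (real h * \<beta>)) \<le> 2 / \<delta> * harm (nat \<lfloor>1 / (2 * \<delta>)\<rfloor>)"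
proof -
  define y where "y h = real h * \<beta> - of_int (round (real h * \<beta>))" for h :: nat
  have y_abs: "\<bar>y h\<bar> = dist_nearest_int (real h * \<beta>)" for h
    unfolding y_def dist_nearest_int_def ..
  have "(\<Sum>h\<in>{1..<L}. 1 / \<bar>y h\<bar>) \<le> 2 / \<delta> * harm (nat \<lfloor>1 / (2 * \<delta>)\<rfloor>)"
  proof (rule sum_inverse_separated_le_harm[OF _ \<delta>])
    show "\<delta> \<le> \<bar>y h\<bar> \<and> \<bar>y h\<bar> \<le> 1 / 2" if "h \<in> {1..<L}" for h
      using far[of "int h"] that dist_nearest_int_le_half unfolding y_abs by auto
    show "\<delta> \<le> \<bar>y h - y h'\<bar>" if "h \<in> {1..<L}" "h' \<in> {1..<L}" "h \<noteq> h'" for h h'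
    proof -
      have "\<delta> \<le> dist_nearest_int (of_int (int h - int h') * \<beta>)" using that by (intro far) auto
      also have "\<dots> \<le> \<bar>of_int (int h - int h') * \<beta> - of_int (round (real h * \<beta>) - round (real h' * \<beta>))\<bar>"
        by (rule dist_nearest_int_le)
      also have "\<dots> = \<bar>y h - y h'\<bar>" unfolding y_def by (simp add: algebra_simps)
      finally show ?thesis .
    qed
  qed simp
  then show ?thesis unfolding y_abs .
qed

lemma harm_nat_floor_le: "(x :: real) > 0 \<Longrightarrow> harm (nat \<lfloor>x\<rfloor>) \<le> 1 + \<bar>ln x\<bar>"
proof (cases "1 \<le> x")
  case True
  then have "harm (nat \<lfloor>x\<rfloor>) - ln (real (nat \<lfloor>x\<rfloor>)) \<le> harm 1 - ln (real (1::nat))"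
    by (intro euler_mascheroni_sequence_decreasing) (auto simp: le_nat_iff)
  moreover have "ln (real (nat \<lfloor>x\<rfloor>)) \<le> ln x" using True by simp
  ultimately show ?thesis by (simp add: harm_def)
next
  case False
  then show ?thesis by (simp add: harm_def)
qed

section \<open>Quadratic Weyl sums with badly approximable coefficient\<close>

lemma dist_nearest_int_div_ge:
  assumes dio: "\<And>q. q \<noteq> 0 \<Longrightarrow> c \<le> \<bar>real_of_int q\<bar> * dist_nearest_int (of_int q * \<alpha>)"
    and q: "q \<noteq> 0" "\<bar>real_of_int q\<bar> \<le> Q" and l: "l \<ge> 1"
  shows "c / (Q * real l) \<le> dist_nearest_int (of_int q * \<alpha> / real l)"
proof -
  have "c \<le> \<bar>real_of_int q\<bar> * dist_nearest_int (real l * (of_int q * \<alpha> / real l))"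
    using dio[OF q(1)] l by simp
  also have "\<dots> \<le> Q * (real l * dist_nearest_int (of_int q * \<alpha> / real l))"
    using q by (intro mult_mono dist_nearest_int_of_nat_mult_le) auto
  finally show ?thesis using q l by (simp add: field_simps)
qed

lemma quadratic_weyl_sum_sq_le_log:
  fixes \<alpha> a :: real and k :: int and l L :: nat
  assumes c: "c > 0"
    and dio: "\<And>q. q \<noteq> 0 \<Longrightarrow> c \<le> \<bar>real_of_int q\<bar> * dist_nearest_int (of_int q * \<alpha>)"
    and k: "k \<noteq> 0" and l: "l \<ge> 1" and L: "L \<ge> 1"
  shows "norm (\<Sum>i<L. e2pi (of_int k * \<alpha> / real l * (a + real i)\<^sup>2)) ^ 2
    \<le> real L + 16 * (real L * \<bar>of_int k\<bar> * real l) / c * (1 + \<bar>ln c\<bar> + ln (real L * \<bar>of_int k\<bar> * real l))"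
proof -
  define \<theta> where "\<theta> = of_int k * \<alpha> / real l"
  define X where "X = real L * \<bar>of_int k\<bar> * real l"
  define \<delta> where "\<delta> = c / (2 * X)"
  have X1: "X \<ge> 1"
  proof -
    have "1 * 1 * 1 \<le> real L * \<bar>of_int k\<bar> * real l" using k l L by (intro mult_mono) auto
    then show ?thesis unfolding X_def by simp
  qed
  have \<delta>: "\<delta> > 0" unfolding \<delta>_def using c X1 by simp
  have far: "\<delta> \<le> dist_nearest_int (of_int m * (2 * \<theta>))" if "m \<noteq> 0" "\<bar>m\<bar> < int L" for m
  proof -
    have "\<bar>real_of_int (2 * m * k)\<bar> \<le> 2 * real L * \<bar>of_int k\<bar>"
      using that k by (simp add: abs_mult mult_right_mono)
    from dist_nearest_int_div_ge[OF dio _ this l] that k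
    show ?thesis unfolding \<delta>_def X_def \<theta>_def by (simp add: mult_ac)
  qed
  have weyl: "norm (\<Sum>i<L. e2pi (\<theta> * (a + real i)\<^sup>2)) ^ 2
      \<le> real L + 4 * (\<Sum>h\<in>{1..<L}. 1 / dist_nearest_int (real h * (2 * \<theta>)))"
  proof (rule norm_quadratic_weyl_sum_sq_le)
    show "0 < dist_nearest_int (real h * (2 * \<theta>))" if "h \<in> {1..<L}" for h
      using far[of "int h"] that \<delta> by simp
  qed
  have spacing: "(\<Sum>h\<in>{1..<L}. 1 / dist_nearest_int (real h * (2 * \<theta>))) \<le> 2 / \<delta> * harm (nat \<lfloor>1 / (2 * \<delta>)\<rfloor>)"
    by (rule sum_inverse_dist_nearest_int_multiples_le[OF \<delta> far])
  have harm_le: "harm (nat \<lfloor>1 / (2 * \<delta>)\<rfloor>) \<le> 1 + \<bar>ln c\<bar> + ln X"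
  proof -
    have "ln (X / c) = ln X - ln c" using c X1 by (simp add: ln_div)
    then have "\<bar>ln (X / c)\<bar> \<le> \<bar>ln c\<bar> + ln X" using ln_ge_zero[OF X1] by linarith
    moreover have "1 / (2 * \<delta>) = X / c" unfolding \<delta>_def using c X1 by simp
    ultimately show ?thesis using harm_nat_floor_le[of "X / c"] c X1 by simp
  qed
  have "2 / \<delta> * harm (nat \<lfloor>1 / (2 * \<delta>)\<rfloor>) \<le> 2 / \<delta> * (1 + \<bar>ln c\<bar> + ln X)"
    using harm_le \<delta> by (intro mult_left_mono) auto
  moreover have "4 * (2 / \<delta> * (1 + \<bar>ln c\<bar> + ln X)) = 16 * X / c * (1 + \<bar>ln c\<bar> + ln X)"
    unfolding \<delta>_def using c X1 by (simp add: field_simps)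
  ultimately show ?thesis using weyl spacing unfolding \<theta>_def X_def by linarith
qed

lemma add_ln_le_powr:
  fixes b X Y \<epsilon> :: real
  assumes b: "0 \<le> b" and \<epsilon>: "0 < \<epsilon>" and Y: "1 \<le> Y" "Y \<le> X"
  shows "b + ln (X * Y) \<le> (b + 1 / \<epsilon>) * X powr (2 * \<epsilon>)"
proof -
  have X1: "1 \<le> X" using Y by linarith
  have "ln (X * Y) \<le> 2 * ln X" using X1 Y by (simp add: ln_mult)
  also have "\<dots> \<le> X powr (2 * \<epsilon>) / \<epsilon>" using ln_powr_bound[OF X1, of "2 * \<epsilon>"] \<epsilon> by simp
  finally have ln_le: "ln (X * Y) \<le> X powr (2 * \<epsilon>) / \<epsilon>" .
  have "b \<le> b * X powr (2 * \<epsilon>)"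
    using mult_left_mono[OF ge_one_powr_ge_zero[OF X1, of "2 * \<epsilon>"] b] \<epsilon> by simp
  from add_mono[OF this ln_le]
  have "b + ln (X * Y) \<le> b * X powr (2 * \<epsilon>) + X powr (2 * \<epsilon>) / \<epsilon>" .
  also have "\<dots> = (b + 1 / \<epsilon>) * X powr (2 * \<epsilon>)" using \<epsilon> by (simp add: field_simps)
  finally show ?thesis .
qed

lemma quadratic_weyl_sum_sq_le_powr:
  fixes \<alpha> a :: real and k :: int and l L :: nat
  assumes c: "c > 0"
    and dio: "\<And>q. q \<noteq> 0 \<Longrightarrow> c \<le> \<bar>real_of_int q\<bar> * dist_nearest_int (of_int q * \<alpha>)"
    and \<epsilon>: "\<epsilon> > 0" and k: "k \<noteq> 0" and l: "l \<ge> 1" and L: "L \<ge> 1"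
  shows "norm (\<Sum>i<L. e2pi (of_int k * \<alpha> / real l * (a + real i)\<^sup>2)) ^ 2
    \<le> (1 + 16 * (1 + \<bar>ln c\<bar> + 1 / \<epsilon>) / c) * (real L * \<bar>of_int k\<bar>) powr (1 + 2 * \<epsilon>) * real l"
proof -
  define S where "S = norm (\<Sum>i<L. e2pi (of_int k * \<alpha> / real l * (a + real i)\<^sup>2))"
  define X where "X = real L * \<bar>of_int k\<bar>"
  define A where "A = 1 + \<bar>ln c\<bar> + 1 / \<epsilon>"
  define R where "R = X powr (1 + 2 * \<epsilon>) * real l"
  have l1: "1 \<le> real l" using l by simp
  have LX: "real L \<le> X" unfolding X_def using k L mult_left_mono[of 1 "\<bar>of_int k\<bar>" "real L"] by simp
  have X1: "1 \<le> X" using LX L by simp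
  have XR: "X * real l \<le> R"
    unfolding R_def using X1 \<epsilon> powr_mono[of 1 "1 + 2 * \<epsilon>" X] by (intro mult_right_mono) auto
  have "X \<le> X * real l" using X1 l1 by (simp add: mult_le_cancel_left1)
  then have LR: "real L \<le> R" using LX XR by linarith
  have "S ^ 2 \<le> R + 16 * A / c * R"
  proof (cases "real L < real l")
    case True
    have "S \<le> (\<Sum>i<L. norm (e2pi (of_int k * \<alpha> / real l * (a + real i)\<^sup>2)))"
      unfolding S_def by (rule norm_sum)
    then have "S \<le> real L" by simp
    then have "S ^ 2 \<le> real L * real l"
      using True unfolding power2_eq_square by (intro mult_mono) (auto simp: S_def)
    also have "\<dots> \<le> X * real l" by (rule mult_right_mono) (use LX in auto)
    finally have "S ^ 2 \<le> R" using XR by linarith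
    moreover have "0 \<le> 16 * A / c * R" using c \<epsilon> unfolding A_def R_def by simp
    ultimately show ?thesis by linarith
  next
    case False
    have "S ^ 2 \<le> real L + 16 * (X * real l) / c * (1 + \<bar>ln c\<bar> + ln (X * real l))"
      unfolding S_def X_def using quadratic_weyl_sum_sq_le_log[OF c dio k l L] by (simp add: mult.assoc)
    also have "\<dots> \<le> real L + 16 * (X * real l) / c * (A * X powr (2 * \<epsilon>))"
      using add_ln_le_powr[of "1 + \<bar>ln c\<bar>" \<epsilon> "real l" X] False LX l1 \<epsilon> c X1
      unfolding A_def by (intro add_left_mono mult_left_mono) auto
    also have "16 * (X * real l) / c * (A * X powr (2 * \<epsilon>)) = 16 * A / c * R"
      unfolding R_def using X1 by (simp add: powr_add field_simps)
    finally show ?thesis using LR by linarith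
  qed
  moreover have "(1 + 16 * A / c) * X powr (1 + 2 * \<epsilon>) * real l = R + 16 * A / c * R"
    unfolding R_def by (simp add: algebra_simps)
  ultimately show ?thesis unfolding S_def A_def X_def by simp
qed

lemma le_sqrt_powr_of_sq_le:
  fixes s D x y z q :: real
  assumes "s\<^sup>2 \<le> D * (x * y) powr q * z" and "0 \<le> D" "0 \<le> x" "0 \<le> y" "0 \<le> z"
  shows "s \<le> sqrt D * x powr (q / 2) * y powr (q / 2) * z powr (1 / 2)"
proof -
  have "s \<le> sqrt (D * (x * y) powr q * z)" using assms(1) by (rule real_le_rsqrt)
  also have "\<dots> = sqrt D * (x * y) powr (q / 2) * z powr (1 / 2)"
    using assms(2-5) by (simp add: real_sqrt_mult powr_half_sqrt powr_half_sqrt_powr)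
  finally show ?thesis using assms(3,4) by (simp add: powr_mult mult.assoc)
qed

lemma quadratic_weyl_sum_bound:
  fixes \<alpha> :: real
  assumes c: "c > 0"
    and dio: "\<And>q. q \<noteq> 0 \<Longrightarrow> c \<le> \<bar>real_of_int q\<bar> * dist_nearest_int (of_int q * \<alpha>)"
    and \<epsilon>: "\<epsilon> > 0"
  shows "\<exists>C>0. \<forall>(k::int) (l::nat) (M::nat) (N::nat).
           k \<noteq> 0 \<longrightarrow> l \<ge> 1 \<longrightarrow> M < N \<longrightarrow>
           cmod (\<Sum>n=M+1..N. exp (2 * pi * \<i> * of_real (real_of_int k * \<alpha> * (real n)^2 / real l)))
             \<le> C * real (N - M) powr (1/2 + \<epsilon>) * \<bar>real_of_int k\<bar> powr (1/2 + \<epsilon>) * real l powr (1/2)"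
proof -
  define D where "D = 1 + 16 * (1 + \<bar>ln c\<bar> + 1 / \<epsilon>) / c"
  have D: "D > 0" unfolding D_def using c \<epsilon> by (simp add: add_pos_nonneg)
  show ?thesis
  proof (intro exI[of _ "sqrt D"] conjI allI impI)
    show "sqrt D > 0" using D by simp
    fix k :: int and l M N :: nat
    assume k: "k \<noteq> 0" and l: "l \<ge> 1" and MN: "M < N"
    let ?W = "\<Sum>i<N - M. e2pi (of_int k * \<alpha> / real l * (real (M + 1) + real i)\<^sup>2)"
    have "(\<Sum>n=M+1..N. exp (2 * pi * \<i> * of_real (real_of_int k * \<alpha> * (real n)^2 / real l)))
        = (\<Sum>n=M+1..N. e2pi (real_of_int k * \<alpha> * (real n)^2 / real l))"
      by (simp only: exp_eq_e2pi)
    also have "\<dots> = ?W"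
      by (rule sum.reindex_bij_witness[of _ "\<lambda>i. M + 1 + i" "\<lambda>n. n - (M + 1)"]) auto
    finally have sum_eq: "(\<Sum>n=M+1..N. exp (2 * pi * \<i> * of_real (real_of_int k * \<alpha> * (real n)^2 / real l))) = ?W" .
    have "N - M \<ge> 1" using MN by simp
    from quadratic_weyl_sum_sq_le_powr[OF c dio \<epsilon> k l this, where a = "real (M + 1)"]
    have "norm ?W ^ 2 \<le> D * (real (N - M) * \<bar>of_int k\<bar>) powr (1 + 2 * \<epsilon>) * real l"
      unfolding D_def .
    from le_sqrt_powr_of_sq_le[OF this] D
    show "cmod (\<Sum>n=M+1..N. exp (2 * pi * \<i> * of_real (real_of_int k * \<alpha> * (real n)^2 / real l)))
        \<le> sqrt D * real (N - M) powr (1/2 + \<epsilon>) * \<bar>real_of_int k\<bar> powr (1/2 + \<epsilon>) * real l powr (1/2)"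
      unfolding sum_eq by (simp add: add_divide_distrib)
  qed
qed

theorem lemma5p1:
  fixes \<alpha> :: real
  assumes "badly_approximable \<alpha>"
  shows "\<forall>\<epsilon>>0. \<exists>C>0. \<forall>(k::int) (l::nat) (M::nat) (N::nat).
           k \<noteq> 0 \<longrightarrow> l \<ge> 1 \<longrightarrow> M < N \<longrightarrow>
           cmod (\<Sum>n=M+1..N. exp (2 * pi * \<i> * of_real (real_of_int k * \<alpha> * (real n)^2 / real l)))
             \<le> C * real (N - M) powr (1/2 + \<epsilon>) * \<bar>real_of_int k\<bar> powr (1/2 + \<epsilon>) * real l powr (1/2)"
proof -
  obtain c where c: "c > 0"
    and dio: "\<And>q. q \<noteq> 0 \<Longrightarrow> c \<le> \<bar>real_of_int q\<bar> * dist_nearest_int (of_int q * \<alpha>)"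
    using badly_approximable_diophantine[OF assms] by blast
  show ?thesis using quadratic_weyl_sum_bound[OF c dio] by blast
qed

end
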